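(* Let $\mathbb{N}$ be a strongly connected directed graph on $\{1,\dots,m\}$ and let $n\ge 1$. For $i\in\{1,\dots,m\}$ let $\mathcal{N}_i=\{j^i_1,\dots,j^i_{m_i}\}$ be the set of neighbors of $i$ (including $i$), let $b_i$ be the $i$th unit vector of $\mathbb{R}^m$, $\tilde B_i = b_i\otimes I_n$, and $\tilde C_i=\mathrm{column}\{C_{ij^i_1},\dots,C_{ij^i_{m_i}}\}$ with $C_{ij}=(b_i'-b_j')\otimes I_n$. Then there exist matrices $\hat H_i\in\mathbb{R}^{n\times nm_i}$, $i\in\{1,\dots,m\}$, such that for every $q\in\{1,\dots,m\}$ the pair $\big(\sum_{i=1}^m\tilde B_i\hat H_i\tilde C_i,\ \tilde B_q\big)$ is controllable with controllability index $m$.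
   Context: The neighbor graph has an arc $j\to i$ iff $j$ is a neighbor of $i$. Strongly connected: directed paths exist between every ordered pair of vertices. The controllability index of a controllable pair $(F,G)$ is the smallest $k$ with $\mathrm{rank}[G\ FG\ \cdots\ F^{k-1}G]$ equal to the state dimension. *)

theory Defs
  imports "Jordan_Normal_Form.DL_Rank"
begin

(* Indices are 0-based: vertices {0..<m} stand for {1,...,m}. *)

definition kron :: "'a::times mat \<Rightarrow> 'a mat \<Rightarrow> 'a mat" where
  "kron A B = mat (dim_row A * dim_row B) (dim_col A * dim_col B)
     (\<lambda>(i,j). A $$ (i div dim_row B, j div dim_col B) * B $$ (i mod dim_row B, j mod dim_col B))"

definition unit_col :: "nat \<Rightarrow> nat \<Rightarrow> real mat" where
  "unit_col m i = mat m 1 (\<lambda>(r,_). if r = i then 1 else 0)"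

definition Btil :: "nat \<Rightarrow> nat \<Rightarrow> nat \<Rightarrow> real mat" where
  "Btil m n i = kron (unit_col m i) (1\<^sub>m n)"

definition Cmat :: "nat \<Rightarrow> nat \<Rightarrow> nat \<Rightarrow> nat \<Rightarrow> real mat" where
  "Cmat m n i j = kron (transpose_mat (unit_col m i) - transpose_mat (unit_col m j)) (1\<^sub>m n)"

fun stack :: "nat \<Rightarrow> 'a::zero mat list \<Rightarrow> 'a mat" where
  "stack nc [] = 0\<^sub>m 0 nc"
| "stack nc (A # As) = mat (dim_row A + dim_row (stack nc As)) nc
     (\<lambda>(i,j). if i < dim_row A then A $$ (i,j) else stack nc As $$ (i - dim_row A, j))"

definition Ctil :: "nat \<Rightarrow> nat \<Rightarrow> (nat \<Rightarrow> nat list) \<Rightarrow> nat \<Rightarrow> real mat" where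
  "Ctil m n nb i = stack (n * m) (map (Cmat m n i) (nb i))"

definition msum :: "nat \<Rightarrow> nat \<Rightarrow> (nat \<Rightarrow> real mat) \<Rightarrow> real mat" where
  "msum d k f = foldr (\<lambda>i acc. f i + acc) [0..<k] (0\<^sub>m d d)"

definition arcs :: "nat \<Rightarrow> (nat \<Rightarrow> nat list) \<Rightarrow> (nat \<times> nat) set" where
  "arcs m nb = {(j, i). i < m \<and> j \<in> set (nb i)}"

definition strongly_connected :: "nat \<Rightarrow> (nat \<Rightarrow> nat list) \<Rightarrow> bool" where
  "strongly_connected m nb = (\<forall>i<m. \<forall>j<m. (i, j) \<in> (arcs m nb)\<^sup>*)"

definition ctrb_mat :: "real mat \<Rightarrow> real mat \<Rightarrow> nat \<Rightarrow> real mat" where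
  "ctrb_mat F G k = mat (dim_row F) (k * dim_col G)
     (\<lambda>(r,c). ((F ^\<^sub>m (c div dim_col G)) * G) $$ (r, c mod dim_col G))"

definition mrank :: "real mat \<Rightarrow> nat" where
  "mrank A = vec_space.rank (dim_row A) A"

definition controllable :: "real mat \<Rightarrow> real mat \<Rightarrow> bool" where
  "controllable F G = (\<exists>k. mrank (ctrb_mat F G k) = dim_row F)"

definition ctrb_index :: "real mat \<Rightarrow> real mat \<Rightarrow> nat" where
  "ctrb_index F G = (LEAST k. mrank (ctrb_mat F G k) = dim_row F)"

end

theory Submission
  imports Defs
begin

(*
  Taking H_i = w_i \<otimes> I_n, where the row w_i holds gains h i j on the neighbours j of i,
  makes the closed-loop matrix L \<otimes> I_n with L the weighted Laplacian of the neighbour graph;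
  since B_q = b_q \<otimes> I_n, the pair is controllable with index m as soon as the m x m matrix
  [b_q, L b_q, ..., L^(m-1) b_q] is invertible.

  For one q this holds when the gains live on a shortest-path spanning tree rooted at q, with
  weight i - q on the arc into i: then L has the distinct eigenvalues i - q, its left
  eigenvectors are supported on the tree paths to q and have nonzero q-th entry, and a
  Vandermonde argument applies. Interpolating these m choices of gains by Lagrange polynomials
  in a parameter t makes every determinant a polynomial in t that is nonzero at some node,
  so a single t works for all q simultaneously.
*)

section \<open>Kronecker products with an identity factor\<close>

lemma index_mult_mat_sum:
  assumes "A \<in> carrier_mat a b" "B \<in> carrier_mat b c" "i < a" "j < c"
  shows "(A * B) $$ (i, j) = (\<Sum>k<b. A $$ (i, k) * B $$ (k, j))"
  using assms by (auto simp: scalar_prod_def atLeast0LessThan intro!: sum.cong)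

lemma sum_lessThan_mult:
  fixes g :: "nat \<Rightarrow> 'a::comm_monoid_add"
  shows "(\<Sum>s<a * n. g s) = (\<Sum>i<a. \<Sum>j<n. g (i * n + j))"
proof -
  have "(\<Sum>s<a * n. g s) = (\<Sum>i<a. sum g {0 + i * n..<n + i * n})"
    by (simp add: sum.nat_group[symmetric] add.commute)
  also have "\<dots> = (\<Sum>i<a. \<Sum>j<n. g (i * n + j))"
    by (simp only: sum.shift_bounds_nat_ivl atLeast0LessThan add.commute)
  finally show ?thesis .
qed

lemma kron_one_carrier: "A \<in> carrier_mat a b \<Longrightarrow> kron A (1\<^sub>m n) \<in> carrier_mat (a * n) (b * n)"
  by (simp add: kron_def)

lemma index_kron_one:
  fixes A :: "'a::semiring_1 mat"
  assumes "A \<in> carrier_mat a b" "i < a * n" "j < b * n"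
  shows "kron A (1\<^sub>m n) $$ (i, j) = (if i mod n = j mod n then A $$ (i div n, j div n) else 0)"
proof -
  have "n > 0" using assms by (cases n) auto
  then show ?thesis using assms by (simp add: kron_def)
qed

lemma kron_one_mult:
  fixes A :: "'a::comm_semiring_1 mat"
  assumes A: "A \<in> carrier_mat a b" and B: "B \<in> carrier_mat b c"
  shows "kron A (1\<^sub>m n) * kron B (1\<^sub>m n) = kron (A * B) (1\<^sub>m n)"
proof (rule eq_matI)
  fix i j assume "i < dim_row (kron (A * B) (1\<^sub>m n))" "j < dim_col (kron (A * B) (1\<^sub>m n))"
  then have i: "i < a * n" and j: "j < c * n" using A B by (auto simp: kron_def)
  then have n: "n > 0" by (cases n) auto
  have ia: "i div n < a" and jc: "j div n < c" using i j by (auto simp: less_mult_imp_div_less)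
  have block: "kron A (1\<^sub>m n) $$ (i, t * n + u) * kron B (1\<^sub>m n) $$ (t * n + u, j) =
      (if u = i mod n \<and> u = j mod n then A $$ (i div n, t) * B $$ (t, j div n) else 0)"
    if t: "t < b" and u: "u < n" for t u
  proof -
    have "t * n + u < Suc t * n" using u by simp
    also have "\<dots> \<le> b * n" using t by (intro mult_le_mono1) simp
    finally have "t * n + u < b * n" .
    then show ?thesis using index_kron_one[OF A i] index_kron_one[OF B _ j] u by auto
  qed
  have "(kron A (1\<^sub>m n) * kron B (1\<^sub>m n)) $$ (i, j) =
      (\<Sum>t<b. \<Sum>u<n. kron A (1\<^sub>m n) $$ (i, t * n + u) * kron B (1\<^sub>m n) $$ (t * n + u, j))"
    by (simp only: index_mult_mat_sum[OF kron_one_carrier[OF A] kron_one_carrier[OF B] i j]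
        sum_lessThan_mult)
  also have "\<dots> = (\<Sum>t<b. if i mod n = j mod n then A $$ (i div n, t) * B $$ (t, j div n) else 0)"
    using n by (intro sum.cong refl) (cases "i mod n = j mod n";
        auto simp: block sum.delta' intro!: sum.neutral)
  also have "\<dots> = kron (A * B) (1\<^sub>m n) $$ (i, j)"
    using index_kron_one[OF mult_carrier_mat[OF A B] i j] index_mult_mat_sum[OF A B ia jc]
    by simp
  finally show "(kron A (1\<^sub>m n) * kron B (1\<^sub>m n)) $$ (i, j) = kron (A * B) (1\<^sub>m n) $$ (i, j)" .
qed (use A B in \<open>auto simp: kron_def\<close>)

lemma kron_one_one: "kron (1\<^sub>m m) (1\<^sub>m n) = (1\<^sub>m (m * n) :: 'a::semiring_1 mat)"
proof (rule eq_matI)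
  fix i j assume "i < dim_row (1\<^sub>m (m * n) :: 'a mat)" "j < dim_col (1\<^sub>m (m * n) :: 'a mat)"
  then have i: "i < m * n" and j: "j < m * n" by auto
  have "i = j \<longleftrightarrow> i div n = j div n \<and> i mod n = j mod n"
    by (metis div_mult_mod_eq)
  then show "kron (1\<^sub>m m) (1\<^sub>m n) $$ (i, j) = (1\<^sub>m (m * n) :: 'a mat) $$ (i, j)"
    using index_kron_one[OF one_carrier_mat i j] i j by (auto simp: less_mult_imp_div_less)
qed (auto simp: kron_def)

lemma kron_one_pow:
  fixes L :: "'a::comm_semiring_1 mat"
  assumes L: "L \<in> carrier_mat m m"
  shows "kron L (1\<^sub>m n) ^\<^sub>m p = kron (L ^\<^sub>m p) (1\<^sub>m n)"
proof (induction p)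
  case 0
  then show ?case using carrier_matD(1)[OF kron_one_carrier[OF L]] L by (simp add: kron_one_one)
next
  case (Suc p)
  then show ?case using kron_one_mult[OF pow_carrier_mat[OF L] L] by simp
qed

lemma det_kron_one_nonzero:
  fixes K :: "'a::field mat"
  assumes K: "K \<in> carrier_mat m m" and "det K \<noteq> 0"
  shows "det (kron K (1\<^sub>m n)) \<noteq> 0"
proof -
  obtain P where P: "P \<in> carrier_mat m m" and "K * P = 1\<^sub>m m"
    using det_non_zero_imp_unit[OF assms, of "()"] unfolding Units_def ring_mat_def by auto
  then have "kron K (1\<^sub>m n) * kron P (1\<^sub>m n) = 1\<^sub>m (m * n)"
    using kron_one_mult[OF K P] kron_one_one by metis
  then have "det (kron K (1\<^sub>m n) * kron P (1\<^sub>m n)) = 1" by simp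
  then have "det (kron K (1\<^sub>m n)) * det (kron P (1\<^sub>m n)) = 1"
    by (simp add: det_mult[OF kron_one_carrier[OF K] kron_one_carrier[OF P]])
  then show ?thesis by auto
qed

lemma stack_carrier_index:
  assumes "\<forall>A\<in>set As. A \<in> carrier_mat r c"
  shows "stack c As \<in> carrier_mat (length As * r) c \<and>
    (\<forall>i j. i < length As * r \<longrightarrow> j < c \<longrightarrow> stack c As $$ (i, j) = As ! (i div r) $$ (i mod r, j))"
  using assms
proof (induction As)
  case (Cons A As)
  then have A: "A \<in> carrier_mat r c" and IH: "stack c As \<in> carrier_mat (length As * r) c"
    "\<forall>i j. i < length As * r \<longrightarrow> j < c \<longrightarrow> stack c As $$ (i, j) = As ! (i div r) $$ (i mod r, j)"
    by auto
  have "stack c (A # As) $$ (i, j) = (A # As) ! (i div r) $$ (i mod r, j)"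
    if i: "i < length (A # As) * r" and j: "j < c" for i j
  proof (cases "i < r")
    case False
    moreover have "r > 0" using i by (cases r) auto
    ultimately have "i - r < length As * r" "(i - r) div r = i div r - 1"
        "(i - r) mod r = i mod r" "i div r \<noteq> 0"
      using i by (auto simp: le_div_geq le_mod_geq)
    then show ?thesis using A IH j False by (cases "i div r") auto
  qed (use A IH j in auto)
  then show ?case using A IH by auto
qed simp

lemma stack_kron_one:
  fixes As :: "'a::semiring_1 mat list"
  assumes "\<forall>A\<in>set As. A \<in> carrier_mat r c"
  shows "stack (c * n) (map (\<lambda>A. kron A (1\<^sub>m n)) As) = kron (stack c As) (1\<^sub>m n)"
proof -
  have kron_As: "\<forall>K\<in>set (map (\<lambda>A. kron A (1\<^sub>m n)) As). K \<in> carrier_mat (r * n) (c * n)"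
    using assms by (auto intro!: kron_one_carrier)
  note lhs = stack_carrier_index[OF kron_As] and rhs = stack_carrier_index[OF assms]
  show ?thesis
  proof (rule eq_matI)
    fix i j assume "i < dim_row (kron (stack c As) (1\<^sub>m n))"
      "j < dim_col (kron (stack c As) (1\<^sub>m n))"
    then have i: "i < length As * (r * n)" and j: "j < c * n"
      using rhs by (auto simp: kron_def)
    then have rn: "r * n > 0" by (cases "r * n") auto
    then have n: "n > 0" by simp
    have blk: "i div (r * n) < length As" "i mod (r * n) < r * n"
      using i rn by (auto simp: less_mult_imp_div_less mult.assoc)
    have idx: "i div (r * n) = i div n div r" "i mod (r * n) div n = i div n mod r"
      "i mod (r * n) mod n = i mod n"
      using n by (auto simp: div_mult2_eq mult.commute[of r n] mod_mult2_eq)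
    have i': "i < length As * r * n" and j': "j div n < c"
      using i j n by (auto simp: less_mult_imp_div_less mult.assoc)
    define A where "A = As ! (i div (r * n))"
    have A: "A \<in> carrier_mat r c" using assms blk(1) by (auto simp: A_def)
    have "stack (c * n) (map (\<lambda>A. kron A (1\<^sub>m n)) As) $$ (i, j) =
        kron A (1\<^sub>m n) $$ (i mod (r * n), j)"
      using lhs i j blk by (simp add: A_def)
    also have "\<dots> = (if i mod n = j mod n then A $$ (i div n mod r, j div n) else 0)"
      using index_kron_one[OF A blk(2) j] idx by simp
    also have "\<dots> = kron (stack c As) (1\<^sub>m n) $$ (i, j)"
      using index_kron_one[OF conjunct1[OF rhs] i' j] rhs i' j' idx n
      by (auto simp: A_def less_mult_imp_div_less)
    finally show "stack (c * n) (map (\<lambda>A. kron A (1\<^sub>m n)) As) $$ (i, j) =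
        kron (stack c As) (1\<^sub>m n) $$ (i, j)" .
  qed (use lhs rhs in \<open>auto simp: kron_def mult.assoc\<close>)
qed

lemma msum_carrier_index:
  assumes "\<forall>i<k. f i \<in> carrier_mat d d"
  shows "msum d k f \<in> carrier_mat d d \<and>
    (\<forall>r c. r < d \<longrightarrow> c < d \<longrightarrow> msum d k f $$ (r, c) = (\<Sum>i<k. f i $$ (r, c)))"
proof -
  have "foldr (\<lambda>i acc. f i + acc) xs (0\<^sub>m d d) \<in> carrier_mat d d \<and>
      (\<forall>r c. r < d \<longrightarrow> c < d \<longrightarrow>
        foldr (\<lambda>i acc. f i + acc) xs (0\<^sub>m d d) $$ (r, c) = (\<Sum>i\<leftarrow>xs. f i $$ (r, c)))"
    if "set xs \<subseteq> {..<k}" for xs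
    using that assms by (induction xs) auto
  from this[of "[0..<k]"] show ?thesis
    by (simp add: msum_def sum_set_upt_conv_sum_list_nat[symmetric] atLeast0LessThan)
qed

lemma msum_kron_one:
  assumes f: "\<forall>i<k. f i \<in> carrier_mat d d"
  shows "msum (d * n) k (\<lambda>i. kron (f i) (1\<^sub>m n)) = kron (msum d k f) (1\<^sub>m n)"
proof -
  have kron_f: "\<forall>i<k. kron (f i) (1\<^sub>m n) \<in> carrier_mat (d * n) (d * n)"
    using f by (auto intro!: kron_one_carrier)
  note lhs = msum_carrier_index[OF kron_f] and rhs = msum_carrier_index[OF f]
  show ?thesis
  proof (rule eq_matI)
    fix r c assume "r < dim_row (kron (msum d k f) (1\<^sub>m n))"
      "c < dim_col (kron (msum d k f) (1\<^sub>m n))"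
    then have r: "r < d * n" and c: "c < d * n" using rhs by (auto simp: kron_def)
    then have "r div n < d" "c div n < d" by (auto simp: less_mult_imp_div_less)
    moreover have "(\<Sum>i<k. kron (f i) (1\<^sub>m n) $$ (r, c)) =
        (\<Sum>i<k. if r mod n = c mod n then f i $$ (r div n, c div n) else 0)"
      by (intro sum.cong refl) (simp add: index_kron_one[OF f[rule_format] r c])
    ultimately show "msum (d * n) k (\<lambda>i. kron (f i) (1\<^sub>m n)) $$ (r, c) =
        kron (msum d k f) (1\<^sub>m n) $$ (r, c)"
      using lhs rhs r c index_kron_one[OF conjunct1[OF rhs] r c] by simp
  qed (use lhs rhs in \<open>auto simp: kron_def\<close>)
qed

section \<open>The closed-loop matrix\<close>

lemma unit_col_carrier: "unit_col m i \<in> carrier_mat m 1"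
  by (simp add: unit_col_def)

definition diff_row :: "nat \<Rightarrow> nat \<Rightarrow> nat \<Rightarrow> real mat" where
  "diff_row m i j = transpose_mat (unit_col m i) - transpose_mat (unit_col m j)"

definition diff_rows :: "nat \<Rightarrow> (nat \<Rightarrow> nat list) \<Rightarrow> nat \<Rightarrow> real mat" where
  "diff_rows m nb i = stack m (map (diff_row m i) (nb i))"

definition weight_row :: "(nat \<Rightarrow> nat list) \<Rightarrow> (nat \<Rightarrow> nat \<Rightarrow> real) \<Rightarrow> nat \<Rightarrow> real mat" where
  "weight_row nb h i = mat 1 (length (nb i)) (\<lambda>(_, t). h i (nb i ! t))"

definition weighted_laplacian ::
    "nat \<Rightarrow> (nat \<Rightarrow> nat list) \<Rightarrow> (nat \<Rightarrow> nat \<Rightarrow> real) \<Rightarrow> real mat" where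
  "weighted_laplacian m nb h = msum m m (\<lambda>i. unit_col m i * weight_row nb h i * diff_rows m nb i)"

lemma diff_row_carrier: "diff_row m i j \<in> carrier_mat 1 m"
  by (auto simp: diff_row_def unit_col_def)

lemma diff_rows_carrier_index:
  "diff_rows m nb i \<in> carrier_mat (length (nb i)) m \<and>
   (\<forall>t c. t < length (nb i) \<longrightarrow> c < m \<longrightarrow>
      diff_rows m nb i $$ (t, c) = (if c = i then 1 else 0) - (if c = nb i ! t then 1 else 0))"
  using stack_carrier_index[of "map (diff_row m i) (nb i)" 1 m] diff_row_carrier
  by (auto simp: diff_rows_def diff_row_def unit_col_def)

lemma diff_rows_carrier: "diff_rows m nb i \<in> carrier_mat (length (nb i)) m"
  using diff_rows_carrier_index ..

lemma index_diff_rows: "t < length (nb i) \<Longrightarrow> c < m \<Longrightarrow>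
    diff_rows m nb i $$ (t, c) = (if c = i then 1 else 0) - (if c = nb i ! t then 1 else 0)"
  using diff_rows_carrier_index by blast

lemma weight_row_carrier: "weight_row nb h i \<in> carrier_mat 1 (length (nb i))"
  by (simp add: weight_row_def)

lemma laplacian_summands_carrier:
  "\<forall>i<m. unit_col m i * weight_row nb h i * diff_rows m nb i \<in> carrier_mat m m"
  using unit_col_carrier weight_row_carrier diff_rows_carrier by (blast intro: mult_carrier_mat)

lemma weighted_laplacian_carrier: "weighted_laplacian m nb h \<in> carrier_mat m m"
  using msum_carrier_index[OF laplacian_summands_carrier] by (simp add: weighted_laplacian_def)

lemma Ctil_eq_kron: "Ctil m n nb i = kron (diff_rows m nb i) (1\<^sub>m n)"
  using stack_kron_one[of "map (diff_row m i) (nb i)" 1 m n] diff_row_carrier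
  by (simp add: Ctil_def Cmat_def[abs_def] diff_row_def[symmetric] diff_rows_def comp_def
      mult.commute)

lemma closed_loop_eq_kron:
  "msum (n * m) m (\<lambda>i. Btil m n i * kron (weight_row nb h i) (1\<^sub>m n) * Ctil m n nb i) =
   kron (weighted_laplacian m nb h) (1\<^sub>m n)"
proof -
  have "Btil m n i * kron (weight_row nb h i) (1\<^sub>m n) * Ctil m n nb i =
      kron (unit_col m i * weight_row nb h i * diff_rows m nb i) (1\<^sub>m n)" for i
    unfolding Btil_def Ctil_eq_kron
    using kron_one_mult[OF unit_col_carrier weight_row_carrier[of nb h i]]
      kron_one_mult[OF mult_carrier_mat[OF unit_col_carrier weight_row_carrier[of nb h i]]
        diff_rows_carrier[of m nb i]]
    by simp
  then show ?thesis
    using msum_kron_one[OF laplacian_summands_carrier]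
    by (simp add: weighted_laplacian_def mult.commute[of n m])
qed

lemma index_weighted_laplacian:
  assumes "i < m" "j < m"
  shows "weighted_laplacian m nb h $$ (i, j) =
    (\<Sum>t<length (nb i).
       h i (nb i ! t) * ((if i = j then 1 else 0) - (if j = nb i ! t then 1 else 0)))"
proof -
  have "(unit_col m k * weight_row nb h k * diff_rows m nb k) $$ (i, j) =
      (if k = i then \<Sum>t<length (nb k). h k (nb k ! t) *
         ((if j = k then 1 else 0) - (if j = nb k ! t then 1 else 0)) else 0)" for k
  proof -
    have "(unit_col m k * weight_row nb h k * diff_rows m nb k) $$ (i, j) =
        unit_col m k $$ (i, 0) * (weight_row nb h k * diff_rows m nb k) $$ (0, j)"
      using index_mult_mat_sum[OF unit_col_carrier
          mult_carrier_mat[OF weight_row_carrier[of nb h k] diff_rows_carrier[of m nb k]] assms]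
        assoc_mult_mat[OF unit_col_carrier weight_row_carrier[of nb h k]
          diff_rows_carrier[of m nb k]]
      by simp
    also have "(weight_row nb h k * diff_rows m nb k) $$ (0, j) =
        (\<Sum>t<length (nb k).
           h k (nb k ! t) * ((if j = k then 1 else 0) - (if j = nb k ! t then 1 else 0)))"
      using index_mult_mat_sum[OF weight_row_carrier[of nb h k] diff_rows_carrier[of m nb k],
          of 0 j]
        index_diff_rows assms
      by (simp add: weight_row_def)
    finally show ?thesis using assms by (simp add: unit_col_def)
  qed
  then show ?thesis
    using msum_carrier_index[OF laplacian_summands_carrier] assms
    by (auto simp: weighted_laplacian_def eq_commute[of j i] sum.delta)
qed

section \<open>Controllability matrices\<close>

lemma ctrb_mat_carrier:
  "L \<in> carrier_mat m m \<Longrightarrow> G \<in> carrier_mat m c \<Longrightarrow> ctrb_mat L G k \<in> carrier_mat m (k * c)"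
  by (simp add: ctrb_mat_def)

lemma index_ctrb_mat:
  assumes "L \<in> carrier_mat m m" "G \<in> carrier_mat m c" "i < m" "j < k * c"
  shows "ctrb_mat L G k $$ (i, j) = (L ^\<^sub>m (j div c) * G) $$ (i, j mod c)"
  using assms by (simp add: ctrb_mat_def)

lemma ctrb_mat_kron_one:
  assumes L: "L \<in> carrier_mat m m" and G: "G \<in> carrier_mat m c"
  shows "ctrb_mat (kron L (1\<^sub>m n)) (kron G (1\<^sub>m n)) k = kron (ctrb_mat L G k) (1\<^sub>m n)"
proof -
  note K = ctrb_mat_carrier[OF L G, of k]
  note LI = kron_one_carrier[OF L, of n] and GI = kron_one_carrier[OF G, of n]
  show ?thesis
  proof (rule eq_matI)
    fix r j assume "r < dim_row (kron (ctrb_mat L G k) (1\<^sub>m n))"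
      "j < dim_col (kron (ctrb_mat L G k) (1\<^sub>m n))"
    then have r: "r < m * n" and j: "j < k * c * n" using K by (auto simp: kron_def)
    then have cn: "c * n > 0" by (cases "c * n") auto
    then have n: "n > 0" by simp
    have idx: "j div (c * n) = j div n div c" "j mod (c * n) div n = j div n mod c"
      "j mod (c * n) mod n = j mod n"
      using n by (auto simp: div_mult2_eq mult.commute[of c n] mod_mult2_eq)
    define p where "p = j div (c * n)"
    have LpG: "L ^\<^sub>m p * G \<in> carrier_mat m c" using L G by (metis mult_carrier_mat pow_carrier_mat)
    have "ctrb_mat (kron L (1\<^sub>m n)) (kron G (1\<^sub>m n)) k $$ (r, j) =
        (kron L (1\<^sub>m n) ^\<^sub>m p * kron G (1\<^sub>m n)) $$ (r, j mod (c * n))"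
      using index_ctrb_mat[OF LI GI r] j by (simp add: p_def mult.assoc)
    also have "\<dots> = kron (L ^\<^sub>m p * G) (1\<^sub>m n) $$ (r, j mod (c * n))"
      by (simp add: kron_one_pow[OF L] kron_one_mult[OF pow_carrier_mat[OF L] G])
    also have "\<dots> = (if r mod n = j mod n then (L ^\<^sub>m p * G) $$ (r div n, j div n mod c) else 0)"
      using index_kron_one[OF LpG r, of "j mod (c * n)"] idx cn by simp
    also have "\<dots> = kron (ctrb_mat L G k) (1\<^sub>m n) $$ (r, j)"
      using index_kron_one[OF K r j] index_ctrb_mat[OF L G, of "r div n" "j div n" k] r j n idx
      by (simp add: p_def less_mult_imp_div_less)
    finally show "ctrb_mat (kron L (1\<^sub>m n)) (kron G (1\<^sub>m n)) k $$ (r, j) =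
        kron (ctrb_mat L G k) (1\<^sub>m n) $$ (r, j)" .
  qed (use K LI GI in \<open>auto simp: ctrb_mat_def kron_def\<close>)
qed

lemma kron_one_controllable_index:
  assumes L: "L \<in> carrier_mat m m" and G: "G \<in> carrier_mat m 1" and n: "n > 0"
    and det: "det (ctrb_mat L G m) \<noteq> 0"
  shows "controllable (kron L (1\<^sub>m n)) (kron G (1\<^sub>m n)) \<and>
    ctrb_index (kron L (1\<^sub>m n)) (kron G (1\<^sub>m n)) = m"
proof -
  let ?rk = "\<lambda>k. mrank (ctrb_mat (kron L (1\<^sub>m n)) (kron G (1\<^sub>m n)) k)"
  have C: "ctrb_mat L G k \<in> carrier_mat m k" for k
    using ctrb_mat_carrier[OF L G] by simp
  have K: "kron (ctrb_mat L G k) (1\<^sub>m n) \<in> carrier_mat (m * n) (k * n)" for k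
    using kron_one_carrier[OF C] .
  have dim: "dim_row (kron L (1\<^sub>m n)) = m * n" using L by (simp add: kron_def)
  have full: "?rk m = m * n"
    using vec_space.det_rank_iff[OF K[of m]] det_kron_one_nonzero[OF C det]
    by (simp add: mrank_def ctrb_mat_kron_one[OF L G] carrier_matD(1)[OF K])
  have "?rk k \<le> k * n" for k
    using vec_space.rank_le_nc[OF K[of k]]
    by (simp add: mrank_def ctrb_mat_kron_one[OF L G] carrier_matD(1)[OF K])
  then have "?rk k \<noteq> m * n" if "k < m" for k
    using mult_less_mono1[OF that n] by (metis leD)
  then have "(LEAST k. ?rk k = m * n) = m"
    using full by (intro Least_equality) (auto simp: not_less[symmetric])
  then show ?thesis
    using full by (auto simp: controllable_def ctrb_index_def dim)
qed

lemma sum_powers_eq_zero_imp_coeff_zero: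
  fixes x c :: "nat \<Rightarrow> 'a::idom"
  assumes inj: "inj_on x {..<m}" and zero: "\<And>k. k < m \<Longrightarrow> (\<Sum>s<m. c s * x k ^ s) = 0"
    and "s < m"
  shows "c s = 0"
proof -
  define p where "p = (\<Sum>s<m. monom (c s) s)"
  have coeff_p: "coeff p i = (if i < m then c i else 0)" for i
    by (simp add: p_def coeff_sum)
  have "p = 0"
  proof (rule ccontr)
    assume "p \<noteq> 0"
    then have "m > 0" by (cases m) (auto simp: p_def)
    have "x ` {..<m} \<subseteq> {y. poly p y = 0}"
      using zero by (auto simp: p_def poly_sum poly_monom)
    then have "card (x ` {..<m}) \<le> card {y. poly p y = 0}"
      by (rule card_mono[OF poly_roots_finite[OF \<open>p \<noteq> 0\<close>]])
    then have "m \<le> card {y. poly p y = 0}"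
      using card_image[OF inj] by simp
    also have "\<dots> \<le> degree p" using card_poly_roots_bound[OF \<open>p \<noteq> 0\<close>] .
    also have "\<dots> \<le> m - 1" by (rule degree_le) (use coeff_p in auto)
    finally show False using \<open>m > 0\<close> by simp
  qed
  then show ?thesis using coeff_p[of s] \<open>s < m\<close> by simp
qed

lemma det_scaled_vandermonde_nonzero:
  fixes M :: "'a::field mat"
  assumes M: "M \<in> carrier_mat m m"
    and entries: "\<And>k s. k < m \<Longrightarrow> s < m \<Longrightarrow> M $$ (k, s) = a k * x k ^ s"
    and a: "\<And>k. k < m \<Longrightarrow> a k \<noteq> 0" and inj: "inj_on x {..<m}"
  shows "det M \<noteq> 0"
proof
  assume "det M = 0"
  then obtain v where v: "v \<in> carrier_vec m" "v \<noteq> 0\<^sub>v m" "M *\<^sub>v v = 0\<^sub>v m"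
    using det_0_iff_vec_prod_zero_field[OF M] by blast
  have zero: "(\<Sum>s<m. v $ s * x k ^ s) = 0" if k: "k < m" for k
  proof -
    have "0 = (M *\<^sub>v v) $ k" using v(3) k by simp
    also have "\<dots> = (\<Sum>s<m. M $$ (k, s) * v $ s)"
      using M v(1) k by (simp add: scalar_prod_def atLeast0LessThan)
    also have "\<dots> = a k * (\<Sum>s<m. v $ s * x k ^ s)"
      by (simp add: entries k sum_distrib_left mult_ac)
    finally show ?thesis using a[OF k] by simp
  qed
  have "v $ s = 0" if "s < m" for s
    using sum_powers_eq_zero_imp_coeff_zero[OF inj zero that] .
  then have "v = 0\<^sub>v m"
    using v(1) by (intro eq_vecI) auto
  with v(2) show False ..
qed

lemma left_eigenvectors_pow:
  fixes L Y :: "'a::comm_ring_1 mat"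
  assumes L: "L \<in> carrier_mat m m" and Y: "Y \<in> carrier_mat m m"
    and eig: "\<And>k j. k < m \<Longrightarrow> j < m \<Longrightarrow> (Y * L) $$ (k, j) = ev k * Y $$ (k, j)"
    and k: "k < m" and j: "j < m"
  shows "(Y * L ^\<^sub>m s) $$ (k, j) = ev k ^ s * Y $$ (k, j)"
  using j
proof (induction s arbitrary: j)
  case 0
  then show ?case using Y L k by simp
next
  case (Suc s)
  have "Y * L ^\<^sub>m Suc s = (Y * L ^\<^sub>m s) * L"
    using assoc_mult_mat[OF Y pow_carrier_mat[OF L] L] by simp
  then have "(Y * L ^\<^sub>m Suc s) $$ (k, j) = (\<Sum>a<m. ev k ^ s * Y $$ (k, a) * L $$ (a, j))"
    using index_mult_mat_sum[OF mult_carrier_mat[OF Y pow_carrier_mat[OF L]] L k Suc(2)] Suc(1)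
    by simp
  also have "\<dots> = ev k ^ s * (Y * L) $$ (k, j)"
    by (simp add: index_mult_mat_sum[OF Y L k Suc(2)] sum_distrib_left mult.assoc)
  finally show ?case using eig[OF k Suc(2)] by (simp add: ac_simps)
qed

lemma det_ctrb_mat_nonzero_if_left_eigenvectors:
  assumes L: "L \<in> carrier_mat m m" and G: "G \<in> carrier_mat m 1" and Y: "Y \<in> carrier_mat m m"
    and eig: "\<And>k j. k < m \<Longrightarrow> j < m \<Longrightarrow> (Y * L) $$ (k, j) = ev k * Y $$ (k, j)"
    and inj: "inj_on ev {..<m}"
    and YG: "\<And>k. k < m \<Longrightarrow> (Y * G) $$ (k, 0) \<noteq> 0"
  shows "det (ctrb_mat L G m) \<noteq> 0"
proof -
  have K: "ctrb_mat L G m \<in> carrier_mat m m" using ctrb_mat_carrier[OF L G] by simp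
  have YK: "(Y * ctrb_mat L G m) $$ (k, s) = (Y * G) $$ (k, 0) * ev k ^ s"
    if k: "k < m" and s: "s < m" for k s
  proof -
    have LsG: "L ^\<^sub>m s * G \<in> carrier_mat m 1" using L G by (metis mult_carrier_mat pow_carrier_mat)
    have "(Y * ctrb_mat L G m) $$ (k, s) = (\<Sum>a<m. Y $$ (k, a) * (L ^\<^sub>m s * G) $$ (a, 0))"
      unfolding index_mult_mat_sum[OF Y K k s]
      by (intro sum.cong refl) (use index_ctrb_mat[OF L G _, of _ s m] s in simp)
    also have "\<dots> = (Y * (L ^\<^sub>m s * G)) $$ (k, 0)"
      using index_mult_mat_sum[OF Y LsG k] by simp
    also have "\<dots> = (\<Sum>a<m. (Y * L ^\<^sub>m s) $$ (k, a) * G $$ (a, 0))"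
      using assoc_mult_mat[OF Y pow_carrier_mat[OF L] G]
        index_mult_mat_sum[OF mult_carrier_mat[OF Y pow_carrier_mat[OF L]] G k] by simp
    also have "\<dots> = ev k ^ s * (Y * G) $$ (k, 0)"
      by (simp add: left_eigenvectors_pow[OF L Y eig] k index_mult_mat_sum[OF Y G k]
          sum_distrib_left mult.assoc)
    finally show ?thesis by simp
  qed
  have "det (Y * ctrb_mat L G m) \<noteq> 0"
    by (rule det_scaled_vandermonde_nonzero[OF mult_carrier_mat[OF Y K] YK YG inj])
  then show ?thesis by (metis det_mult[OF Y K] mult_zero_right)
qed

section \<open>Gains on a spanning tree\<close>

locale rooted_neighbor_graph =
  fixes m :: nat and nb :: "nat \<Rightarrow> nat list" and q :: nat
  assumes root: "q < m"
    and reachable: "\<And>i. i < m \<Longrightarrow> (q, i) \<in> (arcs m nb)\<^sup>*"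
    and distinct_nb: "\<And>i. i < m \<Longrightarrow> distinct (nb i)"
    and nb_range: "\<And>i. i < m \<Longrightarrow> set (nb i) \<subseteq> {..<m}"
begin

definition depth :: "nat \<Rightarrow> nat" where
  "depth i = (LEAST k. (q, i) \<in> arcs m nb ^^ k)"

lemma depth_path:
  assumes "i < m"
  shows "(q, i) \<in> arcs m nb ^^ depth i"
proof -
  obtain k where "(q, i) \<in> arcs m nb ^^ k" using reachable[OF assms] rtrancl_power by blast
  then show ?thesis unfolding depth_def by (rule LeastI)
qed

lemma depth_le: "(q, i) \<in> arcs m nb ^^ k \<Longrightarrow> depth i \<le> k"
  unfolding depth_def by (rule Least_le)

lemma depth_eq_0_iff: "i < m \<Longrightarrow> depth i = 0 \<longleftrightarrow> i = q"
  using depth_path[of i] depth_le[of q 0] by auto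

lemma parent_exists:
  assumes "i < m" "i \<noteq> q"
  shows "\<exists>p. p \<in> set (nb i) \<and> p < m \<and> depth p + 1 = depth i"
proof -
  have "depth i > 0" using depth_eq_0_iff assms by blast
  then have "(q, i) \<in> arcs m nb ^^ Suc (depth i - 1)" using depth_path[OF assms(1)] by simp
  then obtain p where qp: "(q, p) \<in> arcs m nb ^^ (depth i - 1)" and pi: "(p, i) \<in> arcs m nb"
    by (meson relpow_Suc_E)
  have p: "p \<in> set (nb i)" "p < m" using pi nb_range assms(1) by (auto simp: arcs_def)
  have "(q, i) \<in> arcs m nb ^^ Suc (depth p)" using depth_path[OF p(2)] pi by auto
  then have "depth i \<le> depth p + 1" using depth_le by simp
  moreover have "depth p \<le> depth i - 1" using depth_le[OF qp] .
  ultimately show ?thesis using p \<open>depth i > 0\<close> by (intro exI[of _ p]) simp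
qed

text \<open>The arcs from \<open>parent i\<close> to \<open>i\<close> form a shortest-path spanning tree rooted at \<open>q\<close>.\<close>

definition parent :: "nat \<Rightarrow> nat" where
  "parent i = (SOME p. p \<in> set (nb i) \<and> p < m \<and> depth p + 1 = depth i)"

lemma parent:
  assumes "i < m" "i \<noteq> q"
  shows "parent i \<in> set (nb i)" "parent i < m" "depth (parent i) + 1 = depth i"
  using someI_ex[OF parent_exists[OF assms]] unfolding parent_def by auto

definition ancestor :: "nat \<Rightarrow> nat \<Rightarrow> nat" where
  "ancestor k s = (parent ^^ s) k"

lemma ancestor:
  assumes "k < m" "s \<le> depth k"
  shows "ancestor k s < m" "depth (ancestor k s) = depth k - s"
proof -
  have "ancestor k s < m \<and> depth (ancestor k s) = depth k - s"
    using assms(2)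
  proof (induction s)
    case (Suc s)
    then have a: "ancestor k s < m" "depth (ancestor k s) = depth k - s" by auto
    then have "depth (ancestor k s) \<noteq> 0" using Suc.prems by simp
    then have "ancestor k s \<noteq> q" using depth_eq_0_iff[OF a(1)] by simp
    then show ?case using a parent(2,3)[OF a(1)] by (auto simp: ancestor_def)
  qed (simp add: ancestor_def assms(1))
  then show "ancestor k s < m" "depth (ancestor k s) = depth k - s" by auto
qed

lemma ancestor_eq_root_iff:
  assumes "k < m" "s \<le> depth k"
  shows "ancestor k s = q \<longleftrightarrow> s = depth k"
proof -
  have "ancestor k s = q \<longleftrightarrow> depth (ancestor k s) = 0"
    using depth_eq_0_iff[OF ancestor(1)[OF assms]] by simp
  then show ?thesis using ancestor(2)[OF assms] assms(2) by auto
qed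

lemma ancestor_0 [simp]: "ancestor k 0 = k"
  by (simp add: ancestor_def)

lemma parent_ancestor: "k < m \<Longrightarrow> s < depth k \<Longrightarrow> parent (ancestor k s) = ancestor k (Suc s)"
  by (simp add: ancestor_def)

lemma ancestor_Suc_ne_self:
  assumes "k < m" "s < depth k"
  shows "ancestor k (Suc s) \<noteq> k"
proof
  assume "ancestor k (Suc s) = k"
  then have "depth k = depth k - Suc s" using ancestor(2)[of k "Suc s"] assms by simp
  then show False using assms(2) by simp
qed

text \<open>Any labelling that is injective and vanishes exactly at the root would do.\<close>

definition eigval :: "nat \<Rightarrow> real" where
  "eigval i = real i - real q"

lemma eigval_eq_iff: "eigval i = eigval j \<longleftrightarrow> i = j"
  by (simp add: eigval_def)

lemma eigval_eq_0_iff: "eigval i = 0 \<longleftrightarrow> i = q"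
  by (simp add: eigval_def)

definition tree_gain :: "nat \<Rightarrow> nat \<Rightarrow> real" where
  "tree_gain i j = (if i \<noteq> q \<and> j = parent i then eigval i else 0)"

lemma laplacian_tree_gain:
  assumes i: "i < m" and j: "j < m"
  shows "weighted_laplacian m nb tree_gain $$ (i, j) =
    eigval i * ((if i = j then 1 else 0) - (if i \<noteq> q \<and> j = parent i then 1 else 0))"
proof (cases "i = q")
  case True
  then show ?thesis using i j by (simp add: index_weighted_laplacian tree_gain_def eigval_def)
next
  case False
  then obtain t0 where t0: "t0 < length (nb i)" "nb i ! t0 = parent i"
    using parent(1)[OF i] by (auto simp: in_set_conv_nth)
  have gain: "tree_gain i (nb i ! t) = (if t = t0 then eigval i else 0)"
    if "t < length (nb i)" for t
    using False t0 nth_eq_iff_index_eq[OF distinct_nb[OF i] that t0(1)]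
    by (auto simp: tree_gain_def)
  have "weighted_laplacian m nb tree_gain $$ (i, j) = (\<Sum>t<length (nb i).
      if t = t0 then eigval i * ((if i = j then 1 else 0) - (if j = parent i then 1 else 0))
      else 0)"
    unfolding index_weighted_laplacian[OF i j] by (intro sum.cong refl) (simp add: gain t0(2))
  then show ?thesis using t0(1) False by simp
qed

text \<open>The left eigenvector of the tree Laplacian for the eigenvalue \<open>eigval k\<close> is supported
  on the tree path \<open>k, parent k, \<dots>, q\<close>; the eigen-equation, read along that path, forces the
  recursion defining \<open>path_coeff\<close>.\<close>

primrec path_coeff :: "nat \<Rightarrow> nat \<Rightarrow> real" where
  "path_coeff k 0 = 1"
| "path_coeff k (Suc s) =
     eigval (ancestor k s) * path_coeff k s / (eigval (ancestor k (Suc s)) - eigval k)"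

definition left_eigvec :: "nat \<Rightarrow> nat \<Rightarrow> real" where
  "left_eigvec k j = (\<Sum>s\<le>depth k. if ancestor k s = j then path_coeff k s else 0)"

lemma path_coeff_nonzero: "k < m \<Longrightarrow> s \<le> depth k \<Longrightarrow> path_coeff k s \<noteq> 0"
proof (induction s)
  case (Suc s)
  then have "ancestor k s \<noteq> q" "ancestor k (Suc s) \<noteq> k"
    using ancestor_eq_root_iff[of k s] ancestor_Suc_ne_self[of k s] by auto
  then show ?case using Suc by (simp add: eigval_eq_0_iff eigval_eq_iff)
qed simp

lemma left_eigvec_root:
  assumes "k < m"
  shows "left_eigvec k q = path_coeff k (depth k)"
proof -
  have "left_eigvec k q = (\<Sum>s\<le>depth k. if s = depth k then path_coeff k s else 0)"
    unfolding left_eigvec_def by (intro sum.cong refl) (simp add: ancestor_eq_root_iff[OF assms])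
  then show ?thesis by simp
qed

lemma sum_children_left_eigvec:
  assumes k: "k < m"
  shows "(\<Sum>i<m. if i \<noteq> q \<and> j = parent i then eigval i * left_eigvec k i else 0) =
    (\<Sum>s<depth k. if j = ancestor k (Suc s) then eigval (ancestor k s) * path_coeff k s else 0)"
proof -
  have "(\<Sum>i<m. if i \<noteq> q \<and> j = parent i then eigval i * left_eigvec k i else 0) =
      (\<Sum>i<m. \<Sum>s\<le>depth k. if ancestor k s = i
        then (if i \<noteq> q \<and> j = parent i then eigval i * path_coeff k s else 0) else 0)"
    unfolding left_eigvec_def
    by (intro sum.cong refl) (auto simp: sum_distrib_left intro!: sum.cong)
  also have "\<dots> = (\<Sum>s\<le>depth k. if ancestor k s \<noteq> q \<and> j = parent (ancestor k s)
        then eigval (ancestor k s) * path_coeff k s else 0)"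
    by (subst sum.swap, intro sum.cong refl) (simp add: sum.delta' ancestor(1)[OF k])
  also have "\<dots> = (\<Sum>s<depth k. if ancestor k s \<noteq> q \<and> j = parent (ancestor k s)
        then eigval (ancestor k s) * path_coeff k s else 0)"
    using ancestor_eq_root_iff[OF k, of "depth k"] by (simp add: lessThan_Suc_atMost[symmetric])
  also have "\<dots> = (\<Sum>s<depth k. if j = ancestor k (Suc s)
        then eigval (ancestor k s) * path_coeff k s else 0)"
    by (intro sum.cong refl) (simp add: ancestor_eq_root_iff[OF k] parent_ancestor[OF k])
  finally show ?thesis .
qed

lemma sum_path_coeff_shift:
  assumes k: "k < m"
  shows "(\<Sum>s\<le>depth k. if j = ancestor k s
      then (eigval (ancestor k s) - eigval k) * path_coeff k s else 0) =
    (\<Sum>s<depth k. if j = ancestor k (Suc s) then eigval (ancestor k s) * path_coeff k s else 0)"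
proof -
  have "(\<Sum>s<depth k. if j = ancestor k (Suc s)
      then (eigval (ancestor k (Suc s)) - eigval k) * path_coeff k (Suc s) else 0) =
    (\<Sum>s<depth k. if j = ancestor k (Suc s) then eigval (ancestor k s) * path_coeff k s else 0)"
    using ancestor_Suc_ne_self[OF k] by (intro sum.cong refl) (simp add: eigval_eq_iff)
  then show ?thesis
    unfolding lessThan_Suc_atMost[symmetric] sum.lessThan_Suc_shift by simp
qed

lemma left_eigvec_eigen:
  assumes k: "k < m" and j: "j < m"
  shows "(\<Sum>i<m. left_eigvec k i * weighted_laplacian m nb tree_gain $$ (i, j)) =
    eigval k * left_eigvec k j"
proof -
  let ?children = "\<Sum>i<m. if i \<noteq> q \<and> j = parent i then eigval i * left_eigvec k i else 0"
  have "(\<Sum>i<m. left_eigvec k i * weighted_laplacian m nb tree_gain $$ (i, j)) =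
      (\<Sum>i<m. (if i = j then eigval i * left_eigvec k i else 0) -
        (if i \<noteq> q \<and> j = parent i then eigval i * left_eigvec k i else 0))"
    by (intro sum.cong refl) (simp add: laplacian_tree_gain j algebra_simps)
  also have "\<dots> = eigval j * left_eigvec k j - ?children"
    using j by (simp add: sum_subtractf)
  finally have lhs: "(\<Sum>i<m. left_eigvec k i * weighted_laplacian m nb tree_gain $$ (i, j)) =
      eigval j * left_eigvec k j - ?children" .
  have "eigval j * left_eigvec k j - eigval k * left_eigvec k j =
      (\<Sum>s\<le>depth k. if j = ancestor k s
        then (eigval (ancestor k s) - eigval k) * path_coeff k s else 0)"
    unfolding left_eigvec_def sum_distrib_left sum_subtractf[symmetric]
    by (intro sum.cong refl) (auto simp: algebra_simps)
  also have "\<dots> = ?children"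
    unfolding sum_path_coeff_shift[OF k] sum_children_left_eigvec[OF k] ..
  finally show ?thesis using lhs by simp
qed

lemma det_ctrb_tree_laplacian_nonzero:
  "det (ctrb_mat (weighted_laplacian m nb tree_gain) (unit_col m q) m) \<noteq> 0"
proof -
  define Y where "Y = mat m m (\<lambda>(k, j). left_eigvec k j)"
  have Y: "Y \<in> carrier_mat m m" by (simp add: Y_def)
  have "(Y * weighted_laplacian m nb tree_gain) $$ (k, j) = eigval k * Y $$ (k, j)"
    if "k < m" "j < m" for k j
    using index_mult_mat_sum[OF Y weighted_laplacian_carrier that] left_eigvec_eigen[OF that] that
    by (simp add: Y_def)
  moreover have "inj_on eigval {..<m}" by (simp add: inj_on_def eigval_eq_iff)
  moreover have "(Y * unit_col m q) $$ (k, 0) \<noteq> 0" if "k < m" for k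
  proof -
    have "(Y * unit_col m q) $$ (k, 0) = left_eigvec k q"
      using index_mult_mat_sum[OF Y unit_col_carrier that, of 0] that root
      by (simp add: Y_def unit_col_def if_distrib[of "(*) _"] sum.delta' cong: if_cong)
    then show ?thesis using left_eigvec_root[OF that] path_coeff_nonzero[OF that] by simp
  qed
  ultimately show ?thesis
    using det_ctrb_mat_nonzero_if_left_eigenvectors[OF weighted_laplacian_carrier
        unit_col_carrier Y]
    by blast
qed

end

section \<open>Gains depending polynomially on a parameter\<close>

definition polyfun :: "('a::comm_ring_1 \<Rightarrow> 'a) \<Rightarrow> bool" where
  "polyfun f \<longleftrightarrow> (\<exists>p. \<forall>t. f t = poly p t)"

lemma polyfun_const: "polyfun (\<lambda>t. c)"
  unfolding polyfun_def by (rule exI[of _ "[:c:]"]) simp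

lemma polyfun_id: "polyfun (\<lambda>t. t)"
  unfolding polyfun_def by (rule exI[of _ "[:0, 1:]"]) simp

lemma polyfun_add: "polyfun f \<Longrightarrow> polyfun g \<Longrightarrow> polyfun (\<lambda>t. f t + g t)"
  unfolding polyfun_def by (metis poly_add)

lemma polyfun_diff: "polyfun f \<Longrightarrow> polyfun g \<Longrightarrow> polyfun (\<lambda>t. f t - g t)"
  unfolding polyfun_def by (metis poly_diff)

lemma polyfun_mult: "polyfun f \<Longrightarrow> polyfun g \<Longrightarrow> polyfun (\<lambda>t. f t * g t)"
  unfolding polyfun_def by (metis poly_mult)

lemma polyfun_sum: "(\<And>a. a \<in> A \<Longrightarrow> polyfun (f a)) \<Longrightarrow> polyfun (\<lambda>t. \<Sum>a\<in>A. f a t)"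
  by (induction A rule: infinite_finite_induct) (auto intro: polyfun_add polyfun_const)

lemma polyfun_prod: "(\<And>a. a \<in> A \<Longrightarrow> polyfun (f a)) \<Longrightarrow> polyfun (\<lambda>t. \<Prod>a\<in>A. f a t)"
  by (induction A rule: infinite_finite_induct) (auto intro: polyfun_mult polyfun_const)

lemma polyfuns_common_nonzero:
  fixes f :: "nat \<Rightarrow> 'a::{idom, ring_char_0} \<Rightarrow> 'a"
  assumes poly: "\<And>q. q < m \<Longrightarrow> polyfun (f q)" and nonzero: "\<And>q. q < m \<Longrightarrow> \<exists>t. f q t \<noteq> 0"
  shows "\<exists>t. \<forall>q<m. f q t \<noteq> 0"
proof -
  obtain P where P: "\<And>q t. q < m \<Longrightarrow> f q t = poly (P q) t"
    using poly unfolding polyfun_def by metis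
  have "P q \<noteq> 0" if "q < m" for q
    using nonzero[OF that] P[OF that] by auto
  then have "(\<Prod>q<m. P q) \<noteq> 0" by simp
  then have "finite {t. poly (\<Prod>q<m. P q) t = 0}" by (rule poly_roots_finite)
  then obtain t where "poly (\<Prod>q<m. P q) t \<noteq> 0"
    using ex_new_if_finite[OF infinite_UNIV_char_0] by blast
  then show ?thesis using P by (auto simp: poly_prod)
qed

definition polyfun_mat :: "('a::comm_ring_1 \<Rightarrow> 'a mat) \<Rightarrow> nat \<Rightarrow> nat \<Rightarrow> bool" where
  "polyfun_mat A a b \<longleftrightarrow>
     (\<forall>t. A t \<in> carrier_mat a b) \<and> (\<forall>i<a. \<forall>j<b. polyfun (\<lambda>t. A t $$ (i, j)))"

lemma polyfun_mat_const: "M \<in> carrier_mat a b \<Longrightarrow> polyfun_mat (\<lambda>t. M) a b"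
  unfolding polyfun_mat_def by (auto intro: polyfun_const)

lemma polyfun_mat_mult:
  assumes A: "polyfun_mat A a b" and B: "polyfun_mat B b c"
  shows "polyfun_mat (\<lambda>t. A t * B t) a c"
  unfolding polyfun_mat_def
proof (intro conjI allI impI)
  have cA: "\<And>t. A t \<in> carrier_mat a b" and cB: "\<And>t. B t \<in> carrier_mat b c"
    using A B unfolding polyfun_mat_def by auto
  show "A t * B t \<in> carrier_mat a c" for t using cA cB by (rule mult_carrier_mat)
  fix i j assume i: "i < a" and j: "j < c"
  have "polyfun (\<lambda>t. \<Sum>k<b. A t $$ (i, k) * B t $$ (k, j))"
    using A B i j unfolding polyfun_mat_def by (intro polyfun_sum polyfun_mult) auto
  then show "polyfun (\<lambda>t. (A t * B t) $$ (i, j))"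
    by (simp add: index_mult_mat_sum[OF cA cB i j])
qed

lemma polyfun_mat_pow:
  assumes A: "polyfun_mat A a a"
  shows "polyfun_mat (\<lambda>t. A t ^\<^sub>m p) a a"
proof (induction p)
  case 0
  have "A t ^\<^sub>m 0 = 1\<^sub>m a" for t
    using A unfolding polyfun_mat_def by (metis carrier_matD(1) pow_mat.simps(1))
  then show ?case using polyfun_mat_const[OF one_carrier_mat, of a] by simp
next
  case (Suc p)
  then show ?case using polyfun_mat_mult[OF Suc.IH A] by simp
qed

lemma polyfun_det:
  assumes A: "polyfun_mat A a a"
  shows "polyfun (\<lambda>t. det (A t))"
proof -
  have eq: "(\<lambda>t. det (A t)) =
      (\<lambda>t. \<Sum>p | p permutes {0..<a}. of_int (sign p) * (\<Prod>i = 0..<a. A t $$ (i, p i)))"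
    using A by (intro ext det_def') (simp add: polyfun_mat_def)
  show ?thesis unfolding eq
  proof (intro polyfun_sum polyfun_mult polyfun_const polyfun_prod)
    fix p i assume "p \<in> {p. p permutes {0..<a}}" "i \<in> {0..<a}"
    then have "i < a" "p i < a" using permutes_in_image[of p "{0..<a}" i] by auto
    then show "polyfun (\<lambda>t. A t $$ (i, p i))" using A by (simp add: polyfun_mat_def)
  qed
qed

lemma polyfun_mat_ctrb:
  assumes L: "polyfun_mat L m m" and G: "G \<in> carrier_mat m c"
  shows "polyfun_mat (\<lambda>t. ctrb_mat (L t) G k) m (k * c)"
  unfolding polyfun_mat_def
proof (intro conjI allI impI)
  have cL: "L t \<in> carrier_mat m m" for t using L by (simp add: polyfun_mat_def)
  show "ctrb_mat (L t) G k \<in> carrier_mat m (k * c)" for t by (rule ctrb_mat_carrier[OF cL G])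
  fix i j assume "i < m" "j < k * c"
  moreover have "j mod c < c" using \<open>j < k * c\<close> by (cases c) auto
  ultimately show "polyfun (\<lambda>t. ctrb_mat (L t) G k $$ (i, j))"
    using polyfun_mat_mult[OF polyfun_mat_pow[OF L] polyfun_mat_const[OF G], of "j div c"]
    by (simp add: index_ctrb_mat[OF cL G] polyfun_mat_def)
qed

lemma polyfun_mat_weighted_laplacian:
  assumes "\<And>i j. polyfun (\<lambda>t. h t i j)"
  shows "polyfun_mat (\<lambda>t. weighted_laplacian m nb (h t)) m m"
proof -
  have "polyfun (\<lambda>t. weighted_laplacian m nb (h t) $$ (i, j))" if "i < m" "j < m" for i j
    unfolding index_weighted_laplacian[OF that]
    by (intro polyfun_sum polyfun_mult polyfun_const assms)
  then show ?thesis unfolding polyfun_mat_def using weighted_laplacian_carrier by blast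
qed

definition lagrange_basis :: "nat \<Rightarrow> nat \<Rightarrow> real \<Rightarrow> real" where
  "lagrange_basis m q t = (\<Prod>r\<in>{..<m} - {q}. (t - real r) / (real q - real r))"

lemma polyfun_lagrange_basis: "polyfun (lagrange_basis m q)"
  unfolding lagrange_basis_def divide_inverse
  by (intro polyfun_prod polyfun_mult polyfun_diff polyfun_id polyfun_const)

lemma lagrange_basis_node:
  "p < m \<Longrightarrow> lagrange_basis m q (real p) = (if p = q then 1 else 0)"
  by (auto simp: lagrange_basis_def intro!: prod_zero)

lemma exists_gains_ctrb_det_nonzero:
  assumes "\<And>i. i < m \<Longrightarrow> distinct (nb i)" and "\<And>i. i < m \<Longrightarrow> set (nb i) \<subseteq> {..<m}"
    and "strongly_connected m nb"
  shows "\<exists>h. \<forall>q<m. det (ctrb_mat (weighted_laplacian m nb h) (unit_col m q) m) \<noteq> 0"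
proof -
  have tree: "rooted_neighbor_graph m nb q" if "q < m" for q
    using assms that by unfold_locales (auto simp: strongly_connected_def)
  define h where
    "h t i j = (\<Sum>q<m. rooted_neighbor_graph.tree_gain m nb q i j * lagrange_basis m q t)" for t i j
  have node: "h (real q) = rooted_neighbor_graph.tree_gain m nb q" if "q < m" for q
  proof (intro ext)
    fix i j
    have "h (real q) i j = (\<Sum>p<m. if p = q then rooted_neighbor_graph.tree_gain m nb p i j else 0)"
      unfolding h_def by (intro sum.cong refl) (simp add: lagrange_basis_node[OF that])
    then show "h (real q) i j = rooted_neighbor_graph.tree_gain m nb q i j" using that by simp
  qed
  let ?det = "\<lambda>q t. det (ctrb_mat (weighted_laplacian m nb (h t)) (unit_col m q) m)"
  have h_poly: "polyfun (\<lambda>t. h t i j)" for i j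
    unfolding h_def by (intro polyfun_sum polyfun_mult polyfun_const polyfun_lagrange_basis)
  have det_poly: "polyfun (?det q)" if "q < m" for q
    by (rule polyfun_det[OF polyfun_mat_ctrb[OF polyfun_mat_weighted_laplacian[OF h_poly]
          unit_col_carrier, where k = m, simplified]])
  have nonzero: "\<exists>t. ?det q t \<noteq> 0" if "q < m" for q
    using rooted_neighbor_graph.det_ctrb_tree_laplacian_nonzero[OF tree[OF that]] node[OF that]
    by (intro exI[of _ "real q"]) simp
  have "\<exists>t. \<forall>q<m. ?det q t \<noteq> 0"
    by (rule polyfuns_common_nonzero[OF det_poly nonzero])
  then obtain t where "\<forall>q<m. ?det q t \<noteq> 0" ..
  then show ?thesis by (rule exI[of _ "h t"])
qed

theorem lemma3:
  fixes m n :: nat and nb :: "nat \<Rightarrow> nat list"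
  assumes "n \<ge> 1"
    and "\<forall>i<m. distinct (nb i) \<and> i \<in> set (nb i) \<and> set (nb i) \<subseteq> {..<m}"
    and "strongly_connected m nb"
  shows "\<exists>H :: nat \<Rightarrow> real mat.
           (\<forall>i<m. H i \<in> carrier_mat n (n * length (nb i))) \<and>
           (\<forall>q<m. controllable (msum (n * m) m (\<lambda>i. Btil m n i * H i * Ctil m n nb i)) (Btil m n q)
                 \<and> ctrb_index (msum (n * m) m (\<lambda>i. Btil m n i * H i * Ctil m n nb i)) (Btil m n q) = m)"
proof -
  obtain h where h: "\<forall>q<m. det (ctrb_mat (weighted_laplacian m nb h) (unit_col m q) m) \<noteq> 0"
    using exists_gains_ctrb_det_nonzero[of m nb] assms(2,3) by blast
  define H where "H i = kron (weight_row nb h i) (1\<^sub>m n)" for i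
  have F: "msum (n * m) m (\<lambda>i. Btil m n i * H i * Ctil m n nb i) =
      kron (weighted_laplacian m nb h) (1\<^sub>m n)"
    unfolding H_def by (rule closed_loop_eq_kron)
  show ?thesis
  proof (intro exI[of _ H] conjI allI impI)
    show "H i \<in> carrier_mat n (n * length (nb i))" for i
      using kron_one_carrier[OF weight_row_carrier] by (simp add: H_def mult.commute)
  next
    fix q assume "q < m"
    then show "controllable (msum (n * m) m (\<lambda>i. Btil m n i * H i * Ctil m n nb i)) (Btil m n q)"
      "ctrb_index (msum (n * m) m (\<lambda>i. Btil m n i * H i * Ctil m n nb i)) (Btil m n q) = m"
      using kron_one_controllable_index[OF weighted_laplacian_carrier unit_col_carrier _
          h[rule_format]] assms(1)
      unfolding F Btil_def[of m n q] by auto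
  qed
qed

end
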